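(* Let $T$ be an $n$-node tree, $k\ge 2$ an integer, and apply the Rake-and-Compress algorithm with parameter $k$ to $T$. Let $R$ be the set of raked nodes (the union of all rake layers $R_i$). Then every connected component of the induced subgraph $T[R]$ has diameter at most $4(\log_k n+1)+2$.
   Context: Rake-and-Compress algorithm on a tree $T$ with parameter $k\ge 2$: set $V_0=V(T)$; for $i=1,2,\dots,\lceil\log_k n+1\rceil$: (1) let $C_i$ be the set of nodes $u\in V_{i-1}$ such that $u$ and all neighbors of $u$ have degree at most $k$ in $T[V_{i-1}]$ (compress); (2) let $R_i$ be the set of nodes $u\in V_{i-1}\setminus C_i$ with degree at most $1$ in $T[V_{i-1}\setminus C_i]$ (rake); (3) set $V_i=V_{i-1}\setminus(C_i\cup R_i)$. It is known (Chang–Pettie) that every node lies in some $C_i$ or $R_i$. The layers are totally ordered by the time of marking: $C_1<R_1<C_2<R_2<\dots$; node $u$ is lower than node $v$ if $u$'s layer is lower, or they share a layer and $u$ has smaller ID. *)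

theory Defs
  imports Complex_Main
begin

definition walk :: "('a \<Rightarrow> 'a \<Rightarrow> bool) \<Rightarrow> 'a set \<Rightarrow> 'a list \<Rightarrow> bool" where
  "walk E S xs \<longleftrightarrow> xs \<noteq> [] \<and> set xs \<subseteq> S \<and>
     (\<forall>i. Suc i < length xs \<longrightarrow> E (xs ! i) (xs ! Suc i))"

definition reachable :: "('a \<Rightarrow> 'a \<Rightarrow> bool) \<Rightarrow> 'a set \<Rightarrow> 'a \<Rightarrow> 'a \<Rightarrow> bool" where
  "reachable E S u v \<longleftrightarrow> (\<exists>xs. walk E S xs \<and> hd xs = u \<and> last xs = v)"

definition gdist :: "('a \<Rightarrow> 'a \<Rightarrow> bool) \<Rightarrow> 'a set \<Rightarrow> 'a \<Rightarrow> 'a \<Rightarrow> nat" where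
  "gdist E S u v = (LEAST m. \<exists>xs. walk E S xs \<and> hd xs = u \<and> last xs = v \<and> length xs = Suc m)"

definition is_cycle :: "('a \<Rightarrow> 'a \<Rightarrow> bool) \<Rightarrow> 'a set \<Rightarrow> 'a list \<Rightarrow> bool" where
  "is_cycle E S xs \<longleftrightarrow> walk E S xs \<and> distinct xs \<and> length xs \<ge> 3 \<and> E (last xs) (hd xs)"

definition is_tree :: "'a set \<Rightarrow> ('a \<Rightarrow> 'a \<Rightarrow> bool) \<Rightarrow> bool" where
  "is_tree V E \<longleftrightarrow> finite V \<and> V \<noteq> {} \<and>
     (\<forall>u v. E u v \<longrightarrow> E v u) \<and> (\<forall>u. \<not> E u u) \<and>
     (\<forall>u v. E u v \<longrightarrow> u \<in> V \<and> v \<in> V) \<and>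
     (\<forall>u\<in>V. \<forall>v\<in>V. reachable E V u v) \<and>
     (\<nexists>xs. is_cycle E V xs)"

definition deg :: "('a \<Rightarrow> 'a \<Rightarrow> bool) \<Rightarrow> 'a set \<Rightarrow> 'a \<Rightarrow> nat" where
  "deg E S u = card {v \<in> S. E u v}"

definition compress_set :: "nat \<Rightarrow> ('a \<Rightarrow> 'a \<Rightarrow> bool) \<Rightarrow> 'a set \<Rightarrow> 'a set" where
  "compress_set k E S = {u \<in> S. deg E S u \<le> k \<and> (\<forall>v\<in>S. E u v \<longrightarrow> deg E S v \<le> k)}"

definition rake_set :: "nat \<Rightarrow> ('a \<Rightarrow> 'a \<Rightarrow> bool) \<Rightarrow> 'a set \<Rightarrow> 'a set" where
  "rake_set k E S = (let S' = S - compress_set k E S in {u \<in> S'. deg E S' u \<le> 1})"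

definition rc_step :: "nat \<Rightarrow> ('a \<Rightarrow> 'a \<Rightarrow> bool) \<Rightarrow> 'a set \<Rightarrow> 'a set" where
  "rc_step k E S = S - (compress_set k E S \<union> rake_set k E S)"

definition remaining :: "nat \<Rightarrow> 'a set \<Rightarrow> ('a \<Rightarrow> 'a \<Rightarrow> bool) \<Rightarrow> nat \<Rightarrow> 'a set" where
  "remaining k V E i = (rc_step k E ^^ i) V"

definition C_layer :: "nat \<Rightarrow> 'a set \<Rightarrow> ('a \<Rightarrow> 'a \<Rightarrow> bool) \<Rightarrow> nat \<Rightarrow> 'a set" where
  "C_layer k V E i = compress_set k E (remaining k V E (i - 1))"

definition R_layer :: "nat \<Rightarrow> 'a set \<Rightarrow> ('a \<Rightarrow> 'a \<Rightarrow> bool) \<Rightarrow> nat \<Rightarrow> 'a set" where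
  "R_layer k V E i = rake_set k E (remaining k V E (i - 1))"

definition num_iters :: "nat \<Rightarrow> nat \<Rightarrow> nat" where
  "num_iters k n = nat \<lceil>log (real k) (real n) + 1\<rceil>"

definition raked :: "nat \<Rightarrow> 'a set \<Rightarrow> ('a \<Rightarrow> 'a \<Rightarrow> bool) \<Rightarrow> 'a set" where
  "raked k V E = (\<Union>i\<in>{1..num_iters k (card V)}. R_layer k V E i)"

end

theory Submission
  imports Defs
begin

text \<open>Label every raked node by the index of its rake layer. Along a shortest walk inside the
raked set no interior node can carry a label that is at most both neighbouring labels: when
x is raked in layer i, all nodes raked in layers \<open>\<ge> i\<close> still lie in the graph in which x had
degree at most 1, and the two neighbours of x on a shortest walk are distinct. So the labels
along the walk strictly increase and then strictly decrease, and since they range over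
\<open>1..\<lceil>log\<^sub>k n + 1\<rceil>\<close> the walk has at most twice that many edges.\<close>

lemma no_local_min_rising_bound:
  fixes f :: "nat \<Rightarrow> nat"
  assumes no_min: "\<And>j. 0 < j \<Longrightarrow> j < m \<Longrightarrow> f (j - 1) < f j \<or> f (Suc j) < f j"
    and pos: "\<And>i. i \<le> m \<Longrightarrow> 1 \<le> f i"
  shows "j < m \<Longrightarrow> f j \<le> f (Suc j) \<Longrightarrow> j < f j"
proof (induction j)
  case 0
  then show ?case using pos[of 0] by simp
next
  case (Suc j)
  have "f j < f (Suc j)" using no_min[of "Suc j"] Suc.prems by auto
  with Suc show ?case by simp
qed

lemma no_local_min_length_bound:
  fixes f :: "nat \<Rightarrow> nat"
  assumes no_min: "\<And>j. 0 < j \<Longrightarrow> j < m \<Longrightarrow> f (j - 1) < f j \<or> f (Suc j) < f j"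
    and range: "\<And>i. i \<le> m \<Longrightarrow> 1 \<le> f i \<and> f i \<le> L"
  shows "m \<le> 2 * L"
proof -
  obtain p where p: "p \<le> m" and p_max: "\<And>i. i \<le> m \<Longrightarrow> f i \<le> f p"
    using ex_has_greatest_nat[of "\<lambda>i. i \<le> m" 0 f "Suc L"] range by (auto simp: less_Suc_eq_le)
  have left: "p - 1 < L" if "0 < p"
  proof -
    have "p - 1 < f (p - 1)"
      using no_local_min_rising_bound[where f = f and m = m and j = "p - 1"]
        no_min range that p p_max[of "p - 1"] by simp
    then show ?thesis using range[of "p - 1"] p by linarith
  qed
  define g where "g i = f (m - i)" for i
  have g_no_min: "g (j - 1) < g j \<or> g (Suc j) < g j" if "0 < j" "j < m" for j
  proof -
    have "m - (j - 1) = Suc (m - j)" "m - Suc j = m - j - 1" using that by auto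
    then show ?thesis using no_min[of "m - j"] that unfolding g_def by auto
  qed
  have right: "m - p - 1 < L" if "p < m"
  proof -
    have g_at: "g (m - p - 1) = f (Suc p)" "g (Suc (m - p - 1)) = f p"
      using that unfolding g_def by (simp_all add: Suc_diff_Suc)
    have "m - p - 1 < g (m - p - 1)"
      using no_local_min_rising_bound[where f = g and m = m and j = "m - p - 1"]
        g_no_min range that p_max[of "Suc p"] unfolding g_at g_def by auto
    then show ?thesis using g_at range[of "Suc p"] that by simp
  qed
  show ?thesis using left right p by (cases "p = 0"; cases "p < m") auto
qed

lemma walk_drop_backtrack:
  assumes w: "walk E S xs" and j: "0 < j" "Suc j < length xs"
    and returns: "xs ! (j - 1) = xs ! Suc j"
  shows "\<exists>ys. walk E S ys \<and> hd ys = hd xs \<and> last ys = last xs \<and> length ys + 2 = length xs"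
proof -
  define ys where "ys = take j xs @ drop (Suc (Suc j)) xs"
  have len: "length ys + 2 = length xs" unfolding ys_def using j by simp
  have nth: "ys ! i = (if i < j then xs ! i else xs ! (i + 2))" if "i < length ys" for i
    using that j unfolding ys_def by (simp add: nth_append min_def)
  have "take j xs \<noteq> []" using j by (cases xs) auto
  then have ne: "ys \<noteq> []" and hd: "hd ys = hd xs" unfolding ys_def using j by (cases xs; auto)+
  have last: "last ys = last xs"
  proof (cases "Suc (Suc j) < length xs")
    case True
    then show ?thesis unfolding ys_def by simp
  next
    case False
    then have "length xs = Suc (Suc j)" "ys = take j xs" using j unfolding ys_def by auto
    with \<open>take j xs \<noteq> []\<close> show ?thesis using returns j by (simp add: last_conv_nth)
  qed
  have step: "\<And>i. Suc i < length xs \<Longrightarrow> E (xs ! i) (xs ! Suc i)" and "set xs \<subseteq> S"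
    using w unfolding walk_def by auto
  then have set: "set ys \<subseteq> S"
    unfolding ys_def using set_take_subset[of j xs] set_drop_subset[of "Suc (Suc j)" xs] by auto
  have "E (ys ! i) (ys ! Suc i)" if "Suc i < length ys" for i
  proof -
    consider "Suc i < j" | "Suc i = j" | "j \<le> i" by linarith
    then show ?thesis
      using nth[of i] nth[of "Suc i"] that len returns step[of i] step[of "Suc j"] step[of "i + 2"]
      by cases auto
  qed
  then have "walk E S ys" unfolding walk_def using ne set by blast
  then show ?thesis using hd last len by blast
qed

lemma shortest_walk_no_backtrack:
  assumes w: "walk E S xs"
    and shortest: "\<And>ys. walk E S ys \<Longrightarrow> hd ys = hd xs \<Longrightarrow> last ys = last xs \<Longrightarrow> length xs \<le> length ys"
    and j: "0 < j" "Suc j < length xs"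
  shows "xs ! (j - 1) \<noteq> xs ! Suc j"
  using walk_drop_backtrack[OF w j] shortest by fastforce

lemma gdist_shortest_walk:
  assumes "reachable E S u v"
  obtains xs where "walk E S xs" "hd xs = u" "last xs = v" "length xs = Suc (gdist E S u v)"
    and "\<And>ys. walk E S ys \<Longrightarrow> hd ys = u \<Longrightarrow> last ys = v \<Longrightarrow> length xs \<le> length ys"
proof -
  define P where "P m \<longleftrightarrow> (\<exists>xs. walk E S xs \<and> hd xs = u \<and> last xs = v \<and> length xs = Suc m)" for m
  have P_len: "P (length ys - 1)" if "walk E S ys" "hd ys = u" "last ys = v" for ys
    using that unfolding P_def walk_def by auto
  have gd: "gdist E S u v = (LEAST m. P m)" unfolding gdist_def P_def ..
  obtain xs0 where "walk E S xs0" "hd xs0 = u" "last xs0 = v"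
    using assms unfolding reachable_def by blast
  then have "P (length xs0 - 1)" by (rule P_len)
  then have "P (gdist E S u v)" unfolding gd by (rule LeastI)
  then obtain xs where xs: "walk E S xs" "hd xs = u" "last xs = v" "length xs = Suc (gdist E S u v)"
    unfolding P_def by blast
  have "length xs \<le> length ys" if "walk E S ys" "hd ys = u" "last ys = v" for ys
  proof -
    have "gdist E S u v \<le> length ys - 1" unfolding gd by (rule Least_le, rule P_len[OF that])
    moreover have "ys \<noteq> []" using that(1) unfolding walk_def by simp
    ultimately show ?thesis using xs(4) by (cases ys) auto
  qed
  with xs show thesis using that by blast
qed

lemma remaining_Suc: "remaining k V E (Suc i) = rc_step k E (remaining k V E i)"
  unfolding remaining_def by simp

lemma remaining_antimono: "i \<le> j \<Longrightarrow> remaining k V E j \<subseteq> remaining k V E i"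
proof (induction j rule: dec_induct)
  case base
  then show ?case by simp
next
  case (step j)
  then show ?case unfolding remaining_Suc rc_step_def by auto
qed

lemma remaining_subset: "remaining k V E i \<subseteq> V"
  using remaining_antimono[of 0 i k V E] unfolding remaining_def by simp

lemma rake_set_subset: "rake_set k E S \<subseteq> S - compress_set k E S"
  unfolding rake_set_def Let_def by auto

lemma R_layer_later_in_rake_domain:
  assumes "1 \<le> i" "i \<le> i'" "w \<in> R_layer k V E i'"
  shows "w \<in> remaining k V E (i - 1) - compress_set k E (remaining k V E (i - 1))"
proof (cases "i' = i")
  case True
  then show ?thesis
    using assms(3) rake_set_subset[of k E "remaining k V E (i - 1)"] unfolding R_layer_def by auto
next
  case False
  have "w \<in> remaining k V E (i' - 1)"
    using assms(3) rake_set_subset[of k E "remaining k V E (i' - 1)"] unfolding R_layer_def by auto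
  moreover have "remaining k V E (i' - 1) \<subseteq> remaining k V E (Suc (i - 1))"
    using False assms by (intro remaining_antimono) auto
  ultimately show ?thesis unfolding remaining_Suc rc_step_def by blast
qed

lemma R_layer_unique_neighbour_at_or_above:
  assumes "finite V" "1 \<le> i" "u \<in> R_layer k V E i" "E u a" "E u b"
    and "a \<in> R_layer k V E ia" "i \<le> ia" "b \<in> R_layer k V E ib" "i \<le> ib"
  shows "a = b"
proof (rule ccontr)
  assume "a \<noteq> b"
  define S where "S = remaining k V E (i - 1) - compress_set k E (remaining k V E (i - 1))"
  have "a \<in> S" "b \<in> S"
    unfolding S_def using R_layer_later_in_rake_domain[OF assms(2)] assms(6-9) by simp_all
  have "{v \<in> S. E u v} \<subseteq> V"
    using remaining_subset[of k V E "i - 1"] unfolding S_def by blast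
  then have "finite {v \<in> S. E u v}" using assms(1) by (rule finite_subset)
  moreover have "{a, b} \<subseteq> {v \<in> S. E u v}" using \<open>a \<in> S\<close> \<open>b \<in> S\<close> assms(4,5) by simp
  ultimately have "card {a, b} \<le> deg E S u" unfolding deg_def by (rule card_mono)
  also have "deg E S u \<le> 1"
    using assms(3) unfolding R_layer_def rake_set_def Let_def S_def by simp
  finally have "card {a, b} \<le> 1" .
  with \<open>a \<noteq> b\<close> show False by simp
qed

definition rake_index :: "nat \<Rightarrow> 'a set \<Rightarrow> ('a \<Rightarrow> 'a \<Rightarrow> bool) \<Rightarrow> 'a \<Rightarrow> nat" where
  "rake_index k V E x = (LEAST i. 1 \<le> i \<and> i \<le> num_iters k (card V) \<and> x \<in> R_layer k V E i)"

lemma rake_index: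
  assumes "x \<in> raked k V E"
  shows "1 \<le> rake_index k V E x" "rake_index k V E x \<le> num_iters k (card V)"
    and "x \<in> R_layer k V E (rake_index k V E x)"
proof -
  have "\<exists>i. 1 \<le> i \<and> i \<le> num_iters k (card V) \<and> x \<in> R_layer k V E i"
    using assms unfolding raked_def by auto
  from LeastI_ex[OF this] show "1 \<le> rake_index k V E x" "rake_index k V E x \<le> num_iters k (card V)"
    and "x \<in> R_layer k V E (rake_index k V E x)"
    unfolding rake_index_def by blast+
qed

lemma gdist_raked_le:
  assumes fin: "finite V" and sym: "\<And>a b. E a b \<Longrightarrow> E b a"
    and reach: "reachable E (raked k V E) u v"
  shows "gdist E (raked k V E) u v \<le> 2 * num_iters k (card V)"
proof -
  let ?R = "raked k V E" and ?m = "gdist E (raked k V E) u v"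
  obtain xs where xs: "walk E ?R xs" "hd xs = u" "last xs = v" "length xs = Suc ?m"
    and shortest: "\<And>ys. walk E ?R ys \<Longrightarrow> hd ys = u \<Longrightarrow> last ys = v \<Longrightarrow> length xs \<le> length ys"
    using gdist_shortest_walk[OF reach] by blast
  define f where "f i = rake_index k V E (xs ! i)" for i
  have in_R: "xs ! i \<in> ?R" if "i \<le> ?m" for i using xs that unfolding walk_def by auto
  have no_min: "f (j - 1) < f j \<or> f (Suc j) < f j" if j: "0 < j" "j < ?m" for j
  proof (rule ccontr)
    assume "\<not> ?thesis"
    then have le: "f j \<le> f (j - 1)" "f j \<le> f (Suc j)" by auto
    have step: "E (xs ! i) (xs ! Suc i)" if "Suc i < length xs" for i
      using xs(1) that unfolding walk_def by blast
    have "E (xs ! j) (xs ! (j - 1))" using sym step[of "j - 1"] j xs(4) by simp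
    moreover have "E (xs ! j) (xs ! Suc j)" using step[of j] j xs(4) by simp
    moreover have "1 \<le> f j" "xs ! j \<in> R_layer k V E (f j)"
      "xs ! (j - 1) \<in> R_layer k V E (f (j - 1))" "xs ! Suc j \<in> R_layer k V E (f (Suc j))"
      using rake_index(1,3)[OF in_R] j unfolding f_def by simp_all
    ultimately have "xs ! (j - 1) = xs ! Suc j"
      using R_layer_unique_neighbour_at_or_above[OF fin, of "f j"] le by simp
    moreover have "xs ! (j - 1) \<noteq> xs ! Suc j"
      using shortest_walk_no_backtrack[OF xs(1) _ j(1)] shortest xs(2-4) j(2) by simp
    ultimately show False by contradiction
  qed
  have "1 \<le> f i \<and> f i \<le> num_iters k (card V)" if "i \<le> ?m" for i
    using rake_index[OF in_R[OF that]] unfolding f_def by simp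
  then show ?thesis
    using no_local_min_length_bound[where f = f and m = ?m] no_min by blast
qed

lemma num_iters_le:
  assumes "k \<ge> 2" "n \<ge> 1"
  shows "real (num_iters k n) \<le> log (real k) (real n) + 2"
proof -
  have "0 \<le> log (real k) (real n)" using assms by simp
  then have "real (num_iters k n) = of_int \<lceil>log (real k) (real n) + 1\<rceil>"
    unfolding num_iters_def by simp
  then show ?thesis using of_int_ceiling_le_add_one[of "log (real k) (real n) + 1"] by simp
qed

theorem mainTheorem5:
  fixes V :: "'a set" and E :: "'a \<Rightarrow> 'a \<Rightarrow> bool" and k n :: nat
  assumes "is_tree V E" and "card V = n" and "k \<ge> 2"
  shows "\<forall>u\<in>raked k V E. \<forall>v\<in>raked k V E.
           reachable E (raked k V E) u v \<longrightarrow>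
           real (gdist E (raked k V E) u v) \<le> 4 * (log (real k) (real n) + 1) + 2"
proof (intro ballI impI)
  fix u v assume "reachable E (raked k V E) u v"
  have fin: "finite V" and ne: "V \<noteq> {}" and sym: "\<And>a b. E a b \<Longrightarrow> E b a"
    using assms(1) unfolding is_tree_def by auto
  have "n \<ge> 1" using fin ne assms(2) card_gt_0_iff[of V] by linarith
  have "real (gdist E (raked k V E) u v) \<le> 2 * real (num_iters k n)"
    using gdist_raked_le[OF fin sym \<open>reachable E (raked k V E) u v\<close>] assms(2) by simp
  moreover have "0 \<le> log (real k) (real n)" using assms(3) \<open>n \<ge> 1\<close> by simp
  ultimately show "real (gdist E (raked k V E) u v) \<le> 4 * (log (real k) (real n) + 1) + 2"
    using num_iters_le[OF assms(3) \<open>n \<ge> 1\<close>] by argo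
qed

end
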